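(* For every non-empty context $\Gamma$, every formula $A$ and every non-empty context $\Theta$: (i) $\varphi(\Gamma)\le A$ in the Tamari order if and only if $\Gamma\le A$ (with $A$ viewed as a one-element context) in the substitution order; and (ii) $\psi(A)\le\Theta$ in the substitution order if and only if $A\le\varphi(\Theta)$ in the Tamari order. That is, $\psi\dashv\varphi\dashv i$ form an adjoint triple between the poset of formulas and the poset of non-empty contexts, where $i$ sends $A$ to the one-element context $A$.
   Context: Formulas are built from atoms ($p,q,\dots$) by a binary product: every formula is an atom or $A\bullet B$. A context is a finite (possibly empty) list of formulas; commas denote concatenation. The sequent calculus has exactly four rules (no weakening, contraction or exchange): ($\bullet L$) from $A,B,\Delta\vdash C$ infer $A\bullet B,\Delta\vdash C$ (the product must be leftmost); ($\bullet R$) from $\Gamma\vdash A$ and $\Delta\vdash B$ infer $\Gamma,\Delta\vdash A\bullet B$; ($id$) $A\vdash A$; ($cut$) from $\Theta\vdash A$ and $\Gamma,A,\Delta\vdash B$ infer $\Gamma,\Theta,\Delta\vdash B$; derivable means conclusion of a finite derivation tree with no undischarged premises. The Tamari order $\le$ on formulas is the least preorder with $(A\bullet B)\bullet C\le A\bullet(B\bullet C)$ and $A_1\le A_2$, $B_1\le B_2$ implying $A_1\bullet B_1\le A_2\bullet B_2$. The substitution order on contexts is the least relation $\le$ such that: (1) if $\Gamma\vdash A$ is derivable then $\Gamma\le A$ (one-element context); (2) $\cdot\le\cdot$ for the empty context; (3) if $\Gamma_1\le\Gamma_2$ and $\Theta_1\le\Theta_2$ then $(\Gamma_1,\Theta_1)\le(\Gamma_2,\Theta_2)$.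 $\varphi$ is the left-associated product of a non-empty context: $\varphi(A)=A$, $\varphi(\Gamma,A)=\varphi(\Gamma)\bullet A$. $\psi$ is defined by $\psi(p)=p$ for atoms and $\psi(A\bullet B)=\psi(A),B$. *)

theory Defs
  imports Main
begin

datatype 'a fm = Atom 'a | Prod "'a fm" "'a fm"

inductive deriv :: "'a fm list \<Rightarrow> 'a fm \<Rightarrow> bool" where
  prodL: "deriv (A # B # \<Delta>) C \<Longrightarrow> deriv (Prod A B # \<Delta>) C"
| prodR: "deriv \<Gamma> A \<Longrightarrow> deriv \<Delta> B \<Longrightarrow> deriv (\<Gamma> @ \<Delta>) (Prod A B)"
| ident: "deriv [A] A"
| cut: "deriv \<Theta> A \<Longrightarrow> deriv (\<Gamma> @ [A] @ \<Delta>) B \<Longrightarrow> deriv (\<Gamma> @ \<Theta> @ \<Delta>) B"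

inductive tam :: "'a fm \<Rightarrow> 'a fm \<Rightarrow> bool" where
  tam_refl: "tam A A"
| tam_trans: "tam A B \<Longrightarrow> tam B C \<Longrightarrow> tam A C"
| tam_assoc: "tam (Prod (Prod A B) C) (Prod A (Prod B C))"
| tam_mono: "tam A1 A2 \<Longrightarrow> tam B1 B2 \<Longrightarrow> tam (Prod A1 B1) (Prod A2 B2)"

inductive sub_le :: "'a fm list \<Rightarrow> 'a fm list \<Rightarrow> bool" where
  sub_deriv: "deriv \<Gamma> A \<Longrightarrow> sub_le \<Gamma> [A]"
| sub_nil: "sub_le [] []"
| sub_app: "sub_le \<Gamma>1 \<Gamma>2 \<Longrightarrow> sub_le \<Theta>1 \<Theta>2 \<Longrightarrow> sub_le (\<Gamma>1 @ \<Theta>1) (\<Gamma>2 @ \<Theta>2)"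

text \<open>Left-associated product of a non-empty context (unspecified on the empty context).\<close>
fun phi :: "'a fm list \<Rightarrow> 'a fm" where
  "phi (A # \<Gamma>) = foldl Prod A \<Gamma>"

fun psi :: "'a fm \<Rightarrow> 'a fm list" where
  "psi (Atom p) = [Atom p]"
| "psi (Prod A B) = psi A @ [B]"

end

theory Submission
  imports Defs
begin

text \<open>
  Sequents and the Tamari order correspond via \<open>deriv \<Gamma> A \<longleftrightarrow> tam (phi \<Gamma>) A\<close>: every rule
  of the calculus is sound for the Tamari order once contexts are read as left-associated
  products (a product of a split context reassociates into the product of the two parts),
  and conversely each Tamari step is a one-premise derivation, while \<open>\<Gamma> \<turnstile> phi \<Gamma>\<close> always holds.
  Part (i) is this equivalence, since \<open>\<Gamma> \<le> [A]\<close> just means \<open>\<Gamma> \<turnstile> A\<close>. For part (ii),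
  substitution-order inequalities can be plugged into derivations by cut, which makes the
  substitution order transitive; \<open>psi\<close> is monotone, \<open>phi (psi A) = A\<close> and
  \<open>psi (phi \<Theta>) \<le> \<Theta>\<close>, which gives the adjunction \<open>psi \<stileturn> phi\<close>.
\<close>

lemma deriv_nonempty: "deriv \<Gamma> A \<Longrightarrow> \<Gamma> \<noteq> []"
  by (induction rule: deriv.induct) auto

lemma phi_append: "\<Gamma> \<noteq> [] \<Longrightarrow> phi (\<Gamma> @ \<Delta>) = foldl Prod (phi \<Gamma>) \<Delta>"
  by (cases \<Gamma>) auto

lemma phi_snoc: "\<Gamma> \<noteq> [] \<Longrightarrow> phi (\<Gamma> @ [B]) = Prod (phi \<Gamma>) B"
  by (simp add: phi_append)


lemma tam_foldl_Prod_mono: "tam A B \<Longrightarrow> tam (foldl Prod A \<Delta>) (foldl Prod B \<Delta>)"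
  by (induction \<Delta> arbitrary: A B) (auto intro: tam_mono tam_refl)

lemma tam_foldl_Prod_assoc: "tam (foldl Prod A (D # \<Delta>)) (Prod A (foldl Prod D \<Delta>))"
proof (induction \<Delta> rule: rev_induct)
  case Nil
  show ?case by (simp add: tam_refl)
next
  case (snoc E \<Delta>)
  have "tam (Prod (foldl Prod A (D # \<Delta>)) E) (Prod (Prod A (foldl Prod D \<Delta>)) E)"
    using snoc by (intro tam_mono tam_refl)
  then show ?case
    using tam_assoc tam_trans by fastforce
qed

lemma tam_phi_append:
  "\<Gamma> \<noteq> [] \<Longrightarrow> \<Delta> \<noteq> [] \<Longrightarrow> tam (phi (\<Gamma> @ \<Delta>)) (Prod (phi \<Gamma>) (phi \<Delta>))"
  using tam_foldl_Prod_assoc[of "phi \<Gamma>"] by (cases \<Delta>) (auto simp: phi_append)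

lemma tam_phi_replace:
  assumes "tam A A'"
  shows "tam (phi (\<Gamma> @ [A] @ \<Delta>)) (phi (\<Gamma> @ [A'] @ \<Delta>))"
proof (cases "\<Gamma> = []")
  case True
  then show ?thesis
    using assms by (simp add: tam_foldl_Prod_mono)
next
  case False
  then show ?thesis
    using assms by (simp add: phi_append[of \<Gamma>] del: phi.simps)
      (intro tam_foldl_Prod_mono tam_mono tam_refl)
qed

lemma tam_phi_collapse:
  assumes "\<Theta> \<noteq> []"
  shows "tam (phi (\<Gamma> @ \<Theta> @ \<Delta>)) (phi (\<Gamma> @ [phi \<Theta>] @ \<Delta>))"
proof (cases "\<Gamma> = []")
  case True
  then show ?thesis
    using assms by (cases \<Theta>) (auto simp: tam_refl)
next
  case False
  have "phi (\<Gamma> @ \<Theta> @ \<Delta>) = foldl Prod (phi (\<Gamma> @ \<Theta>)) \<Delta>"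
    using False by (metis append.assoc append_is_Nil_conv phi_append)
  moreover have "phi (\<Gamma> @ [phi \<Theta>] @ \<Delta>) = foldl Prod (Prod (phi \<Gamma>) (phi \<Theta>)) \<Delta>"
    using False by (metis append.assoc append_is_Nil_conv phi_append phi_snoc)
  ultimately show ?thesis
    using tam_phi_append[OF False assms] by (simp add: tam_foldl_Prod_mono)
qed


lemma deriv_imp_tam_phi: "deriv \<Gamma> A \<Longrightarrow> tam (phi \<Gamma>) A"
proof (induction rule: deriv.induct)
  case (prodL A B \<Delta> C)
  then show ?case by simp
next
  case (prodR \<Gamma> A \<Delta> B)
  then have "tam (phi (\<Gamma> @ \<Delta>)) (Prod (phi \<Gamma>) (phi \<Delta>))"
    by (intro tam_phi_append) (auto dest: deriv_nonempty)
  moreover have "tam (Prod (phi \<Gamma>) (phi \<Delta>)) (Prod A B)"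
    using prodR by (intro tam_mono)
  ultimately show ?case by (rule tam_trans)
next
  case (ident A)
  show ?case by (simp add: tam_refl)
next
  case (cut \<Theta> A \<Gamma> \<Delta> B)
  then have "tam (phi (\<Gamma> @ \<Theta> @ \<Delta>)) (phi (\<Gamma> @ [phi \<Theta>] @ \<Delta>))"
    by (intro tam_phi_collapse) (auto dest: deriv_nonempty)
  moreover have "tam (phi (\<Gamma> @ [phi \<Theta>] @ \<Delta>)) (phi (\<Gamma> @ [A] @ \<Delta>))"
    using cut by (intro tam_phi_replace)
  ultimately show ?case
    using cut tam_trans by metis
qed

lemma deriv_single_trans: "deriv [A] B \<Longrightarrow> deriv [B] C \<Longrightarrow> deriv [A] C"
  using cut[of "[A]" B "[]" "[]" C] by simp

lemma tam_imp_deriv_single: "tam A B \<Longrightarrow> deriv [A] B"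
proof (induction rule: tam.induct)
  case (tam_refl A)
  show ?case by (rule ident)
next
  case (tam_trans A B C)
  then show ?case by (blast intro: deriv_single_trans)
next
  case (tam_assoc A B C)
  have "deriv ([A] @ [B] @ [C]) (Prod A (Prod B C))"
    by (intro prodR ident)
  then have "deriv [Prod (Prod A B) C] (Prod A (Prod B C))"
    by (simp add: prodL)
  then show ?case .
next
  case (tam_mono A1 A2 B1 B2)
  then have "deriv ([A1] @ [B1]) (Prod A2 B2)"
    by (intro prodR)
  then show ?case by (simp add: prodL)
qed

lemma deriv_phi: "\<Gamma> \<noteq> [] \<Longrightarrow> deriv \<Gamma> (phi \<Gamma>)"
proof (induction \<Gamma> rule: rev_induct)
  case Nil
  then show ?case by simp
next
  case (snoc B \<Gamma>)
  show ?case
  proof (cases "\<Gamma> = []")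
    case True
    then show ?thesis by (simp add: ident)
  next
    case False
    then have "deriv (\<Gamma> @ [B]) (Prod (phi \<Gamma>) B)"
      using snoc by (intro prodR ident) auto
    then show ?thesis
      using False by (simp add: phi_snoc del: phi.simps)
  qed
qed

lemma deriv_iff_tam_phi: "\<Gamma> \<noteq> [] \<Longrightarrow> deriv \<Gamma> A \<longleftrightarrow> tam (phi \<Gamma>) A"
  using deriv_imp_tam_phi deriv_phi tam_imp_deriv_single cut[of \<Gamma> "phi \<Gamma>" "[]" "[]" A]
  by fastforce


lemma sub_le_subst: "sub_le \<Gamma> \<Theta> \<Longrightarrow> deriv (\<Sigma> @ \<Theta> @ \<Delta>) C \<Longrightarrow> deriv (\<Sigma> @ \<Gamma> @ \<Delta>) C"
proof (induction arbitrary: \<Sigma> \<Delta> rule: sub_le.induct)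
  case (sub_deriv \<Gamma> A)
  then show ?case using cut by fastforce
next
  case sub_nil
  then show ?case by simp
next
  case (sub_app \<Gamma>1 \<Gamma>2 \<Theta>1 \<Theta>2)
  have "deriv ((\<Sigma> @ \<Gamma>2) @ \<Theta>2 @ \<Delta>) C"
    using sub_app.prems by simp
  then have "deriv (\<Sigma> @ \<Gamma>2 @ (\<Theta>1 @ \<Delta>)) C"
    using sub_app.IH(2) by fastforce
  then have "deriv (\<Sigma> @ \<Gamma>1 @ (\<Theta>1 @ \<Delta>)) C"
    by (rule sub_app.IH(1))
  then show ?case by simp
qed

lemma sub_le_single_iff: "sub_le \<Gamma> [A] \<longleftrightarrow> deriv \<Gamma> A"
  using sub_le_subst[of \<Gamma> "[A]" "[]" "[]" A] ident[of A] sub_deriv by auto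

lemma sub_le_imp_deriv_phi: "sub_le \<Gamma> \<Theta> \<Longrightarrow> \<Theta> \<noteq> [] \<Longrightarrow> deriv \<Gamma> (phi \<Theta>)"
  using sub_le_subst[of \<Gamma> \<Theta> "[]" "[]" "phi \<Theta>"] deriv_phi[of \<Theta>] by simp

lemma sub_le_Nil_right: "sub_le \<Gamma> [] \<Longrightarrow> \<Gamma> = []"
  by (induction \<Gamma> "[] :: 'a fm list" rule: sub_le.induct) auto

lemma sub_le_refl: "sub_le \<Gamma> \<Gamma>"
proof (induction \<Gamma>)
  case Nil
  show ?case by (rule sub_nil)
next
  case (Cons A \<Gamma>)
  have "sub_le ([A] @ \<Gamma>) ([A] @ \<Gamma>)"
    by (intro sub_app sub_deriv ident Cons)
  then show ?case by simp
qed

lemma sub_le_append_rightE: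
  assumes "sub_le \<Gamma> (\<Theta>1 @ \<Theta>2)"
  obtains \<Gamma>1 \<Gamma>2 where "\<Gamma> = \<Gamma>1 @ \<Gamma>2" "sub_le \<Gamma>1 \<Theta>1" "sub_le \<Gamma>2 \<Theta>2"
  using assms
proof (induction \<Gamma> "\<Theta>1 @ \<Theta>2" arbitrary: \<Theta>1 \<Theta>2 thesis rule: sub_le.induct)
  case (sub_deriv \<Gamma> A)
  then have "\<Theta>1 = [] \<and> \<Theta>2 = [A] \<or> \<Theta>1 = [A] \<and> \<Theta>2 = []"
    by (cases \<Theta>1) auto
  then show ?case
    using sub_deriv.prems sub_le.sub_deriv[OF sub_deriv.hyps(1)] sub_nil
    by (metis append.left_neutral append_Nil2)
next
  case sub_nil
  then show ?case using sub_le.sub_nil by auto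
next
  case (sub_app \<Gamma>1 \<Gamma>2 \<Sigma>1 \<Sigma>2)
  from sub_app.hyps(5) obtain us where
    "\<Gamma>2 = \<Theta>1 @ us \<and> us @ \<Sigma>2 = \<Theta>2 \<or> \<Theta>1 = \<Gamma>2 @ us \<and> \<Sigma>2 = us @ \<Theta>2"
    by (auto simp: append_eq_append_conv2)
  then show ?case
  proof
    assume split: "\<Gamma>2 = \<Theta>1 @ us \<and> us @ \<Sigma>2 = \<Theta>2"
    obtain \<Xi>1 \<Xi>2 where "\<Gamma>1 = \<Xi>1 @ \<Xi>2" "sub_le \<Xi>1 \<Theta>1" "sub_le \<Xi>2 us"
      using sub_app.hyps(2) split by blast
    then show ?thesis
      using split sub_app.hyps(3) sub_app.prems sub_le.sub_app by (metis append.assoc)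
  next
    assume split: "\<Theta>1 = \<Gamma>2 @ us \<and> \<Sigma>2 = us @ \<Theta>2"
    obtain \<Xi>1 \<Xi>2 where "\<Sigma>1 = \<Xi>1 @ \<Xi>2" "sub_le \<Xi>1 us" "sub_le \<Xi>2 \<Theta>2"
      using sub_app.hyps(4) split by blast
    then show ?thesis
      using split sub_app.hyps(1) sub_app.prems sub_le.sub_app by (metis append.assoc)
  qed
qed

lemma sub_le_trans:
  assumes "sub_le \<Gamma> \<Delta>" and "sub_le \<Delta> \<Theta>"
  shows "sub_le \<Gamma> \<Theta>"
  using assms(2,1)
proof (induction arbitrary: \<Gamma> rule: sub_le.induct)
  case (sub_deriv \<Delta> A)
  then show ?case
    using sub_le_subst[of \<Gamma> \<Delta> "[]" "[]" A] sub_le.sub_deriv by simp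
next
  case sub_nil
  then show ?case
    using sub_le_Nil_right sub_le.sub_nil by blast
next
  case (sub_app \<Delta>1 \<Theta>1 \<Delta>2 \<Theta>2)
  obtain \<Gamma>1 \<Gamma>2 where "\<Gamma> = \<Gamma>1 @ \<Gamma>2" "sub_le \<Gamma>1 \<Delta>1" "sub_le \<Gamma>2 \<Delta>2"
    using sub_app.prems by (rule sub_le_append_rightE)
  then show ?case
    using sub_app.IH by (simp add: sub_le.sub_app)
qed


lemma psi_nonempty: "psi A \<noteq> []"
  by (induction A) auto

lemma phi_psi: "phi (psi A) = A"
  by (induction A) (auto simp: phi_snoc psi_nonempty)

lemma psi_mono: "tam A B \<Longrightarrow> sub_le (psi A) (psi B)"
proof (induction rule: tam.induct)
  case (tam_refl A)
  show ?case by (rule sub_le_refl)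
next
  case (tam_trans A B C)
  then show ?case by (blast intro: sub_le_trans)
next
  case (tam_assoc A B C)
  have "sub_le ([B] @ [C]) [Prod B C]"
    by (intro sub_deriv prodR ident)
  then have "sub_le (psi A @ [B, C]) (psi A @ [Prod B C])"
    by (intro sub_app sub_le_refl) simp
  then show ?case by simp
next
  case (tam_mono A1 A2 B1 B2)
  then have "sub_le [B1] [B2]"
    by (intro sub_deriv tam_imp_deriv_single)
  then show ?case
    using tam_mono by (simp add: sub_app)
qed

lemma psi_phi_le: "\<Theta> \<noteq> [] \<Longrightarrow> sub_le (psi (phi \<Theta>)) \<Theta>"
proof (induction \<Theta> rule: rev_induct)
  case Nil
  then show ?case by simp
next
  case (snoc B \<Theta>)
  show ?case
  proof (cases "\<Theta> = []")
    case True
    have "sub_le (psi B) [B]"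
      by (simp add: sub_le_single_iff deriv_iff_tam_phi psi_nonempty phi_psi tam_refl)
    then show ?thesis using True by simp
  next
    case False
    then have "sub_le (psi (phi \<Theta>) @ [B]) (\<Theta> @ [B])"
      using snoc by (intro sub_app sub_le_refl) auto
    then show ?thesis
      using False by (simp add: phi_snoc del: phi.simps)
  qed
qed

theorem proposition2p7:
  fixes \<Gamma> \<Theta> :: "'a fm list" and A :: "'a fm"
  assumes "\<Gamma> \<noteq> []" and "\<Theta> \<noteq> []"
  shows "(tam (phi \<Gamma>) A \<longleftrightarrow> sub_le \<Gamma> [A]) \<and> (sub_le (psi A) \<Theta> \<longleftrightarrow> tam A (phi \<Theta>))"
proof
  show "tam (phi \<Gamma>) A \<longleftrightarrow> sub_le \<Gamma> [A]"
    using assms(1) by (simp add: sub_le_single_iff deriv_iff_tam_phi)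
  show "sub_le (psi A) \<Theta> \<longleftrightarrow> tam A (phi \<Theta>)"
  proof
    assume "sub_le (psi A) \<Theta>"
    then have "deriv (psi A) (phi \<Theta>)"
      using assms(2) by (rule sub_le_imp_deriv_phi)
    then show "tam A (phi \<Theta>)"
      using deriv_imp_tam_phi phi_psi by metis
  next
    assume "tam A (phi \<Theta>)"
    then show "sub_le (psi A) \<Theta>"
      using psi_mono psi_phi_le assms(2) sub_le_trans by blast
  qed
qed

end
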